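(* For every $f\in\mathbb X_1$ and every $\eta\in\mathbb R$, the limit $\lim_{\varepsilon\to0^+}\mathsf R_{\varepsilon+i\eta}f$ exists in $\mathbb X_0$ and equals $\mathsf R_{i\eta}f$. Moreover, if $k\ge0$ and $f\in\mathbb X_{k+1}$, then $\mathsf R_{i\eta}f\in\mathbb X_k$ and $\lim_{\varepsilon\to0^+}\|\mathsf R_{\varepsilon+i\eta}f-\mathsf R_{i\eta}f\|_{\mathbb X_k}=0$.
   Context: Let $d\ge2$, $\Omega\subset\mathbb R^d$ bounded open with $\mathcal C^1$ boundary. Let $\bm m$ be a nonnegative Borel measure on $\mathbb R^d$ with support $V$, $\bm m(\{0\})=0$. For $k\in\mathbb N$, $\mathbb X_k=L^1(\Omega\times V,\max(1,|v|^{-k})\,\mathrm dx\,\bm m(\mathrm dv))$ with its natural norm. Let $t_-(x,v)=\inf\{s>0:x-sv\notin\Omega\}$ and, for $\mathrm{Re}\lambda\ge0$, $\mathsf R_\lambda f(x,v)=\int_0^{t_-(x,v)}f(x-sv,v)e^{-\lambda s}\mathrm ds$, $(x,v)\in\Omega\times V$ (for $\mathrm{Re}\lambda>0$, $\mathsf R_\lambda=(\lambda-\mathsf T_0)^{-1}$, the resolvent of free transport with absorbing boundary). *)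

theory Defs
  imports "HOL-Analysis.Analysis"
begin

text \<open>C^1 boundary: near every boundary point, after an orthogonal change of
coordinates, the domain is the strict epigraph of a C^1 function of the
remaining coordinates (here: a C^1 function g not depending on coordinate i).\<close>
definition C1_boundary :: "(real^'n) set \<Rightarrow> bool" where
  "C1_boundary \<Omega> \<longleftrightarrow>
    (\<forall>x0\<in>frontier \<Omega>. \<exists>r>0. \<exists>T i. \<exists>g :: real^'n \<Rightarrow> real. \<exists>G :: real^'n \<Rightarrow> real^'n.
        orthogonal_transformation T \<and>
        (\<forall>y z. (\<forall>j. j \<noteq> i \<longrightarrow> y$j = z$j) \<longrightarrow> g y = g z) \<and>
        (\<forall>y. (g has_derivative (\<lambda>h. G y \<bullet> h)) (at y)) \<and> continuous_on UNIV G \<and>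
        \<Omega> \<inter> ball x0 r = {x \<in> ball x0 r. g (T x) < (T x)$i})"

definition msupport :: "'a::topological_space measure \<Rightarrow> 'a set" where
  "msupport m = {v. \<forall>U. open U \<and> v \<in> U \<longrightarrow> emeasure m U > 0}"

text \<open>Weight max(1,|v|^{-k}) (at v = 0, a null set, it is taken to be 1).\<close>
definition wt :: "nat \<Rightarrow> real^'n \<Rightarrow> real" where
  "wt k v = max 1 (1 / norm v ^ k)"

definition inX :: "(real^'n) set \<Rightarrow> (real^'n) measure \<Rightarrow> nat \<Rightarrow> ((real^'n) \<times> (real^'n) \<Rightarrow> complex) \<Rightarrow> bool" where
  "inX \<Omega> m k f \<longleftrightarrow> f \<in> borel_measurable (lborel \<Otimes>\<^sub>M m) \<and>
     (\<integral>\<^sup>+ z. indicator (\<Omega> \<times> msupport m) z * ennreal (wt k (snd z) * norm (f z)) \<partial>(lborel \<Otimes>\<^sub>M m)) < \<infinity>"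

definition Xnorm :: "(real^'n) set \<Rightarrow> (real^'n) measure \<Rightarrow> nat \<Rightarrow> ((real^'n) \<times> (real^'n) \<Rightarrow> complex) \<Rightarrow> real" where
  "Xnorm \<Omega> m k f = enn2real
     (\<integral>\<^sup>+ z. indicator (\<Omega> \<times> msupport m) z * ennreal (wt k (snd z) * norm (f z)) \<partial>(lborel \<Otimes>\<^sub>M m))"

text \<open>Exit time t_-(x,v) (v = 0, a null set, is given the value 0 by convention).\<close>
definition tminus :: "(real^'n) set \<Rightarrow> real^'n \<Rightarrow> real^'n \<Rightarrow> real" where
  "tminus \<Omega> x v = (if v = 0 then 0 else Inf {s. s > 0 \<and> x - s *\<^sub>R v \<notin> \<Omega>})"

definition Rres :: "(real^'n) set \<Rightarrow> complex \<Rightarrow> ((real^'n) \<times> (real^'n) \<Rightarrow> complex) \<Rightarrow> (real^'n) \<times> (real^'n) \<Rightarrow> complex" where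
  "Rres \<Omega> lam f z = (case z of (x, v) \<Rightarrow>
     LINT s:{0<..<tminus \<Omega> x v}|lborel. f (x - s *\<^sub>R v, v) * exp (- (lam * complex_of_real s)))"

end

theory Submission
  imports Defs
begin

text \<open>For \<open>Re \<lambda> \<ge> 0\<close> the damping factor \<open>exp (- \<lambda> s)\<close> has modulus at most 1, so
  \<open>|R_\<lambda> f| \<le> R_0 |f|\<close> pointwise. A backward trajectory \<open>x - s v\<close> that starts and ends in
  \<open>\<Omega> \<subseteq> ball 0 R\<close> lasts less than \<open>2 R / |v|\<close>, so by Tonelli and translation invariance
  the \<open>x\<close>-integral over \<open>\<Omega>\<close> of \<open>R_0 |f| (x, v)\<close> is at most \<open>2 R / |v|\<close> times that of
  \<open>|f (x, v)|\<close>. Since \<open>max 1 |v|^-k / |v| \<le> max 1 |v|^-(k+1)\<close>, the majorant \<open>R_0 |f|\<close> lies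
  in \<open>X_k\<close> when \<open>f \<in> X_(k+1)\<close>, hence is finite almost everywhere. Dominated convergence in
  \<open>s\<close> then gives \<open>R_\<lambda> f \<rightarrow> R_\<mu> f\<close> pointwise as \<open>\<lambda> \<rightarrow> \<mu>\<close> in the closed right half plane,
  and dominated convergence in \<open>(x, v)\<close>, with majorant \<open>2 R_0 |f|\<close>, gives convergence in
  \<open>X_k\<close>.\<close>

lemma wt_ge_1: "1 \<le> wt k v"
  unfolding wt_def by simp

lemma wt_divide_norm_le:
  assumes "v \<noteq> 0"
  shows "wt k v / norm v \<le> wt (Suc k) v"
proof (cases "norm v \<ge> 1")
  case True
  then have "1 / norm v ^ k \<le> 1"
    using le_divide_eq_1 by fastforce
  then have "wt k v = 1"
    by (simp add: wt_def)
  with True have "wt k v / norm v \<le> 1"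
    using le_divide_eq_1 by fastforce
  then show ?thesis
    using wt_ge_1[of "Suc k" v] by linarith
next
  case False
  with assms have "wt k v = 1 / norm v ^ k"
    by (simp add: wt_def power_le_one)
  then show ?thesis
    by (simp add: wt_def ac_simps)
qed

lemma ennreal_wt_mult: "0 \<le> a \<Longrightarrow> ennreal (wt k v * a) = ennreal (wt k v) * ennreal a"
  using wt_ge_1[of k v] by (simp add: ennreal_mult)

lemma ennreal_wt_mult_divide_norm_le:
  assumes "v \<noteq> 0"
  shows "ennreal (wt k v) * ennreal (c / norm v) \<le> ennreal c * ennreal (wt (Suc k) v)"
proof (cases "0 \<le> c")
  case True
  have "wt k v * (c / norm v) \<le> c * wt (Suc k) v"
    using mult_left_mono[OF wt_divide_norm_le[OF assms], of c k] True by (simp add: field_simps)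
  with True show ?thesis
    using wt_ge_1[of k v] wt_ge_1[of "Suc k" v] by (simp add: ennreal_mult[symmetric])
next
  case False
  then have "c / norm v \<le> 0"
    by (simp add: divide_nonpos_nonneg)
  then show ?thesis
    by (simp add: ennreal_neg)
qed

lemma borel_measurable_wt [measurable]: "wt k \<in> borel_measurable borel"
  unfolding wt_def by measurable

section \<open>Exit time\<close>

lemma tminus_zero [simp]: "tminus \<Omega> x 0 = 0"
  by (simp add: tminus_def)

lemma exit_times_nonempty:
  fixes \<Omega> :: "'a::real_normed_vector set"
  assumes "bounded \<Omega>" "v \<noteq> 0"
  shows "{s. s > 0 \<and> x - s *\<^sub>R v \<notin> \<Omega>} \<noteq> {}"
proof -
  obtain R where R: "R > 0" "\<Omega> \<subseteq> ball 0 R"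
    using bounded_subset_ballD[OF assms(1), of 0] by auto
  define s where "s = (R + norm x) / norm v + 1"
  have "s > 0" "s * norm v = R + norm x + norm v"
    using R assms(2) by (simp_all add: s_def add_pos_nonneg field_simps)
  moreover have "s * norm v \<le> norm x + norm (x - s *\<^sub>R v)"
    using norm_triangle_ineq4[of x "x - s *\<^sub>R v"] \<open>s > 0\<close> by simp
  ultimately have "R \<le> norm (x - s *\<^sub>R v)"
    using norm_ge_zero[of v] by linarith
  with R have "x - s *\<^sub>R v \<notin> \<Omega>"
    by auto
  with \<open>s > 0\<close> show ?thesis by auto
qed

lemma tminus_nonneg:
  assumes "bounded \<Omega>"
  shows "0 \<le> tminus \<Omega> x v"
proof (cases "v = 0")
  case False
  have "0 \<le> Inf {s. s > 0 \<and> x - s *\<^sub>R v \<notin> \<Omega>}"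
    using exit_times_nonempty[OF assms False] by (intro cInf_greatest) auto
  with False show ?thesis
    by (simp add: tminus_def)
qed simp

lemma mem_of_less_tminus:
  assumes "0 < s" "s < tminus \<Omega> x v"
  shows "x - s *\<^sub>R v \<in> \<Omega>"
proof (rule ccontr)
  assume "x - s *\<^sub>R v \<notin> \<Omega>"
  with assms have "Inf {s. s > 0 \<and> x - s *\<^sub>R v \<notin> \<Omega>} \<le> s"
    by (intro cInf_lower bdd_belowI[of _ 0]) auto
  with assms show False
    by (auto simp: tminus_def split: if_splits)
qed

definition ray_inside :: "(real^'n) set \<Rightarrow> real \<Rightarrow> ((real^'n) \<times> (real^'n)) set" where
  "ray_inside \<Omega> r = {(x, v). \<forall>s. 0 < s \<and> s < r \<longrightarrow> x - s *\<^sub>R v \<in> \<Omega>}"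

lemma less_tminus_iff_ray_inside:
  assumes "bounded \<Omega>" "v \<noteq> 0"
  shows "a < tminus \<Omega> x v \<longleftrightarrow> (\<exists>r::rat. a < of_rat r \<and> (x, v) \<in> ray_inside \<Omega> (of_rat r))"
proof
  assume "a < tminus \<Omega> x v"
  then obtain r :: rat where "a < of_rat r" "of_rat r < tminus \<Omega> x v"
    using of_rat_dense by blast
  then show "\<exists>r::rat. a < of_rat r \<and> (x, v) \<in> ray_inside \<Omega> (of_rat r)"
    by (auto simp: ray_inside_def intro!: mem_of_less_tminus)
next
  assume "\<exists>r::rat. a < of_rat r \<and> (x, v) \<in> ray_inside \<Omega> (of_rat r)"
  then obtain r :: rat where r: "a < of_rat r" "(x, v) \<in> ray_inside \<Omega> (of_rat r)"
    by blast
  have "of_rat r \<le> Inf {s. s > 0 \<and> x - s *\<^sub>R v \<notin> \<Omega>}"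
    using r(2) exit_times_nonempty[OF assms]
    by (intro cInf_greatest) (auto simp: ray_inside_def not_less[symmetric])
  with r(1) assms(2) show "a < tminus \<Omega> x v"
    by (simp add: tminus_def)
qed

lemma closed_exit_between:
  fixes \<Omega> :: "'a::euclidean_space set"
  assumes "open \<Omega>"
  shows "closed {z. \<exists>s\<in>{a..b}. fst z - s *\<^sub>R snd z \<notin> \<Omega>}"
proof -
  have "closed ((\<lambda>p. fst (snd p) - fst p *\<^sub>R snd (snd p)) -` (- \<Omega>))"
    using assms by (intro continuous_closed_vimage continuous_intros) auto
  from closed_compact_projection[OF compact_Icc this] show ?thesis
    by (simp add: Bex_def)
qed

lemma ray_inside_borel:
  fixes \<Omega> :: "(real^'n) set"
  assumes "open \<Omega>"
  shows "ray_inside \<Omega> r \<in> sets borel"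
proof -
  define K where "K j = {z. \<exists>s\<in>{inverse (real (Suc j)) .. r - inverse (real (Suc j))}.
      fst z - s *\<^sub>R snd z \<notin> \<Omega>}" for j
  have "ray_inside \<Omega> r = - (\<Union>j. K j)"
  proof (intro set_eqI iffI)
    fix z assume z: "z \<in> ray_inside \<Omega> r"
    have "z \<notin> K j" for j
    proof (cases z)
      case (Pair x v)
      have "x - s *\<^sub>R v \<in> \<Omega>" if "s \<in> {inverse (real (Suc j)) .. r - inverse (real (Suc j))}" for s
      proof -
        have "0 < inverse (real (Suc j))" by simp
        with that have "0 < s" "s < r"
          unfolding atLeastAtMost_iff by linarith+
        with z Pair show ?thesis by (simp add: ray_inside_def)
      qed
      with Pair show ?thesis by (auto simp: K_def)
    qed
    then show "z \<in> - (\<Union>j. K j)" by blast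
  next
    fix z :: "(real^'n) \<times> (real^'n)" assume z: "z \<in> - (\<Union>j. K j)"
    show "z \<in> ray_inside \<Omega> r"
    proof (cases z, clarsimp simp: ray_inside_def)
      fix x v s assume xv: "z = (x, v)" and s: "0 < s" "s < r"
      then obtain j where "inverse (real (Suc j)) < min s (r - s)"
        using reals_Archimedean[of "min s (r - s)"] by auto
      then have "s \<in> {inverse (real (Suc j)) .. r - inverse (real (Suc j))}" by auto
      moreover have "z \<notin> K j" using z by blast
      ultimately show "x - s *\<^sub>R v \<in> \<Omega>"
        by (auto simp: K_def xv)
    qed
  qed
  then show ?thesis
    unfolding K_def using closed_exit_between[OF assms] by (auto intro!: borel_closed)
qed

lemma borel_measurable_tminus [measurable]:
  assumes "open \<Omega>" "bounded \<Omega>"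
  shows "(\<lambda>z. tminus \<Omega> (fst z) (snd z)) \<in> borel_measurable borel"
proof (rule borel_measurable_iff_greater[THEN iffD2], intro allI)
  fix a :: real
  have "{z. a < tminus \<Omega> (fst z) (snd z)} =
      (if a < 0 then UNIV else {z. snd z \<noteq> 0} \<inter> (\<Union>r\<in>{r. a < of_rat r}. ray_inside \<Omega> (of_rat r)))"
  proof (cases "a < 0")
    case True
    then show ?thesis
      using tminus_nonneg[OF assms(2)] by (auto intro: less_le_trans)
  next
    case False
    have "a < tminus \<Omega> x v \<longleftrightarrow> v \<noteq> 0 \<and> (\<exists>r::rat. a < of_rat r \<and> (x, v) \<in> ray_inside \<Omega> (of_rat r))"
      for x v
      using less_tminus_iff_ray_inside[OF assms(2)] False by (cases "v = 0") auto
    with False show ?thesis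
      by auto
  qed
  moreover have "{z :: (real^'n) \<times> (real^'n). snd z \<noteq> 0} \<in> sets borel"
    by (intro borel_open open_Collect_neq continuous_intros)
  ultimately show "{z \<in> space borel. a < tminus \<Omega> (fst z) (snd z)} \<in> sets borel"
    using ray_inside_borel[OF assms(1)]
    by (auto intro: sets.countable_UN')
qed

section \<open>The resolvent and its majorant\<close>

lemma sets_borel_pair_lborel:
  "sets (borel \<Otimes>\<^sub>M lborel) = sets (borel :: ('a::second_countable_topology \<times> real) measure)"
proof -
  have "sets (borel \<Otimes>\<^sub>M lborel) = sets (borel \<Otimes>\<^sub>M (borel :: real measure) :: ('a \<times> real) measure)"
    by (rule sets_pair_measure_cong) simp_all
  then show ?thesis
    by (subst (asm) borel_prod) simp
qed

lemma borel_measurable_backward_trajectory: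
  fixes f :: "(real^'n) \<times> (real^'n) \<Rightarrow> 'b::topological_space"
  assumes "f \<in> borel_measurable borel"
  shows "(\<lambda>p. f (fst (fst p) - snd p *\<^sub>R snd (fst p), snd (fst p))) \<in> borel_measurable (borel \<Otimes>\<^sub>M lborel)"
proof -
  have "(\<lambda>p :: ((real^'n) \<times> (real^'n)) \<times> real. (fst (fst p) - snd p *\<^sub>R snd (fst p), snd (fst p)))
      \<in> borel_measurable borel"
    by (intro borel_measurable_continuous_onI continuous_intros)
  from measurable_compose[OF this assms] show ?thesis
    by (simp add: measurable_cong_sets[OF sets_borel_pair_lborel refl] case_prod_beta')
qed

lemma borel_measurable_indicator_before_exit:
  fixes \<Omega> :: "(real^'n) set"
  assumes "open \<Omega>" "bounded \<Omega>"
  shows "(\<lambda>p. indicator {0<..<tminus \<Omega> (fst (fst p)) (snd (fst p))} (snd p) :: 'a::{zero_neq_one, topological_space})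
    \<in> borel_measurable (borel \<Otimes>\<^sub>M lborel)"
proof -
  have [measurable]: "(\<lambda>p :: ((real^'n) \<times> (real^'n)) \<times> real. tminus \<Omega> (fst (fst p)) (snd (fst p)))
      \<in> borel_measurable borel"
    using measurable_compose[OF borel_measurable_continuous_onI borel_measurable_tminus[OF assms],
        of fst] by (simp add: continuous_on_fst)
  have [measurable]: "(snd :: ((real^'n) \<times> (real^'n)) \<times> real \<Rightarrow> real) \<in> borel_measurable borel"
    by (intro borel_measurable_continuous_onI continuous_on_snd continuous_on_id)
  have "{p :: ((real^'n) \<times> (real^'n)) \<times> real. 0 < snd p \<and> snd p < tminus \<Omega> (fst (fst p)) (snd (fst p))}
      \<in> sets borel"
    by measurable
  then show ?thesis
    by (simp add: measurable_cong_sets[OF sets_borel_pair_lborel refl] case_prod_beta' indicator_def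
        borel_measurable_indicator)
qed

text \<open>\<open>Rres_abs \<Omega> f\<close> is \<open>R\<^sub>0 |f|\<close>; unlike \<open>Rres\<close> it is always defined, possibly as \<open>\<infinity>\<close>.\<close>
definition Rres_abs :: "(real^'n) set \<Rightarrow> ((real^'n) \<times> (real^'n) \<Rightarrow> complex) \<Rightarrow> (real^'n) \<times> (real^'n) \<Rightarrow> ennreal" where
  "Rres_abs \<Omega> f z = (case z of (x, v) \<Rightarrow>
     \<integral>\<^sup>+s\<in>{0<..<tminus \<Omega> x v}. ennreal (norm (f (x - s *\<^sub>R v, v))) \<partial>lborel)"

lemma Rres_as_integral:
  "Rres \<Omega> lam f z = (\<integral>s. indicator {0<..<tminus \<Omega> (fst z) (snd z)} s *\<^sub>R
     (f (fst z - s *\<^sub>R snd z, snd z) * exp (- (lam * complex_of_real s))) \<partial>lborel)"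
  by (cases z) (simp add: Rres_def set_lebesgue_integral_def)

lemma Rres_abs_as_integral:
  "Rres_abs \<Omega> f z = (\<integral>\<^sup>+s. ennreal (indicator {0<..<tminus \<Omega> (fst z) (snd z)} s *
     norm (f (fst z - s *\<^sub>R snd z, snd z))) \<partial>lborel)"
  by (cases z) (auto simp: Rres_abs_def indicator_def intro!: nn_integral_cong)

lemma norm_damped_integrand_le:
  assumes "0 \<le> Re lam"
  shows "norm (indicator {0<..<t} s *\<^sub>R (a * exp (- (lam * complex_of_real s))))
    \<le> indicator {0<..<t} s * norm a"
proof -
  have "norm (exp (- (lam * complex_of_real s))) \<le> 1" if "0 < s"
    using assms that by simp
  then show ?thesis
    by (auto simp: norm_mult indicator_def intro: mult_left_le)
qed

context
  fixes \<Omega> :: "(real^'n) set" and f :: "(real^'n) \<times> (real^'n) \<Rightarrow> complex"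
  assumes open_\<Omega>: "open \<Omega>" and bounded_\<Omega>: "bounded \<Omega>" and f_borel: "f \<in> borel_measurable borel"
begin

lemma borel_measurable_Rres: "Rres \<Omega> lam f \<in> borel_measurable borel"
proof -
  note [measurable] = borel_measurable_indicator_before_exit[OF open_\<Omega> bounded_\<Omega>]
    borel_measurable_backward_trajectory[OF f_borel]
  have "(\<lambda>z. \<integral>s. indicator {0<..<tminus \<Omega> (fst z) (snd z)} s *\<^sub>R
     (f (fst z - s *\<^sub>R snd z, snd z) * exp (- (lam * complex_of_real s))) \<partial>lborel) \<in> borel_measurable borel"
    by measurable
  then show ?thesis
    unfolding Rres_as_integral .
qed

lemma borel_measurable_Rres_abs: "Rres_abs \<Omega> f \<in> borel_measurable borel"
proof -
  note [measurable] = borel_measurable_indicator_before_exit[OF open_\<Omega> bounded_\<Omega>]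
    borel_measurable_backward_trajectory[OF f_borel]
  have "(\<lambda>z. \<integral>\<^sup>+s. ennreal (indicator {0<..<tminus \<Omega> (fst z) (snd z)} s *
     norm (f (fst z - s *\<^sub>R snd z, snd z))) \<partial>lborel) \<in> borel_measurable borel"
    by measurable
  then show ?thesis
    unfolding Rres_abs_as_integral .
qed

lemma borel_measurable_along_ray: "(\<lambda>s. f (x - s *\<^sub>R v, v)) \<in> borel_measurable borel"
  by (rule measurable_compose[OF _ f_borel]) (intro borel_measurable_continuous_onI continuous_intros)

lemma Rres_tendsto:
  assumes fin: "Rres_abs \<Omega> f z < \<infinity>" and Re_ge: "\<And>n. 0 \<le> Re (lam_seq n)" and lim: "lam_seq \<longlonglongrightarrow> lam"
  shows "(\<lambda>n. Rres \<Omega> (lam_seq n) f z) \<longlonglongrightarrow> Rres \<Omega> lam f z"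
proof -
  obtain x v where z: "z = (x, v)" by (cases z)
  define G where "G \<mu> s = indicator {0<..<tminus \<Omega> x v} s *\<^sub>R (f (x - s *\<^sub>R v, v) * exp (- (\<mu> * complex_of_real s)))"
    for \<mu> s
  define w where "w s = indicator {0<..<tminus \<Omega> x v} s * norm (f (x - s *\<^sub>R v, v))" for s
  note [measurable] = borel_measurable_along_ray
  have [measurable]: "G \<mu> \<in> borel_measurable lborel" for \<mu>
    unfolding G_def by measurable
  have "integrable lborel w"
  proof (rule integrableI_bounded)
    show "w \<in> borel_measurable lborel"
      unfolding w_def by measurable
    show "(\<integral>\<^sup>+s. ennreal (norm (w s)) \<partial>lborel) < \<infinity>"
      using fin by (simp add: z w_def Rres_abs_as_integral)
  qed
  moreover have "norm (G (lam_seq n) s) \<le> w s" for n s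
    unfolding G_def w_def by (rule norm_damped_integrand_le[OF Re_ge])
  moreover have "(\<lambda>n. G (lam_seq n) s) \<longlonglongrightarrow> G lam s" for s
    unfolding G_def by (intro tendsto_intros lim)
  ultimately have "(\<lambda>n. integral\<^sup>L lborel (G (lam_seq n))) \<longlonglongrightarrow> integral\<^sup>L lborel (G lam)"
    by (intro integral_dominated_convergence[where w=w] AE_I2) auto
  then show ?thesis
    by (simp add: z Rres_as_integral G_def[abs_def])
qed

end

lemma norm_Rres_le_Rres_abs:
  assumes "0 \<le> Re lam"
  shows "ennreal (norm (Rres \<Omega> lam f z)) \<le> Rres_abs \<Omega> f z"
proof -
  define G where "G s = indicator {0<..<tminus \<Omega> (fst z) (snd z)} s *\<^sub>R
     (f (fst z - s *\<^sub>R snd z, snd z) * exp (- (lam * complex_of_real s)))" for s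
  have "norm (G s) \<le> indicator {0<..<tminus \<Omega> (fst z) (snd z)} s * norm (f (fst z - s *\<^sub>R snd z, snd z))" for s
    unfolding G_def by (rule norm_damped_integrand_le[OF assms])
  then have "(\<integral>\<^sup>+s. norm (G s) \<partial>lborel) \<le> Rres_abs \<Omega> f z"
    unfolding Rres_abs_as_integral by (intro nn_integral_mono ennreal_leI)
  moreover have "ennreal (norm (integral\<^sup>L lborel G)) \<le> (\<integral>\<^sup>+s. norm (G s) \<partial>lborel)"
    by (cases "integrable lborel G") (simp_all add: integral_norm_bound_ennreal not_integrable_integral_eq)
  ultimately show ?thesis
    by (simp add: Rres_as_integral G_def[abs_def])
qed

lemma norm_Rres_le_enn2real_Rres_abs:
  assumes "0 \<le> Re lam" and "Rres_abs \<Omega> f z < \<infinity>"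
  shows "norm (Rres \<Omega> lam f z) \<le> enn2real (Rres_abs \<Omega> f z)"
  using enn2real_mono[OF norm_Rres_le_Rres_abs[OF assms(1)], of \<Omega> f z] assms(2) by simp

lemma norm_Rres_diff_le:
  assumes "0 \<le> Re lam" and "0 \<le> Re \<mu>" and "Rres_abs \<Omega> f z < \<infinity>"
  shows "norm (Rres \<Omega> lam f z - Rres \<Omega> \<mu> f z) \<le> 2 * enn2real (Rres_abs \<Omega> f z)"
  using norm_triangle_ineq4[of "Rres \<Omega> lam f z" "Rres \<Omega> \<mu> f z"]
    norm_Rres_le_enn2real_Rres_abs[OF assms(1,3)] norm_Rres_le_enn2real_Rres_abs[OF assms(2,3)]
  by linarith

section \<open>Transit time through a bounded domain\<close>

lemma nn_integral_backward_ray_le: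
  fixes \<Omega> :: "'a::euclidean_space set" and g :: "'a \<Rightarrow> ennreal"
  assumes \<Omega>: "\<Omega> \<in> sets borel" "\<Omega> \<subseteq> ball 0 R" and v: "v \<noteq> 0"
    and g: "g \<in> borel_measurable borel" and g_zero: "\<And>y. y \<notin> \<Omega> \<Longrightarrow> g y = 0"
  shows "(\<integral>\<^sup>+x\<in>\<Omega>. (\<integral>\<^sup>+s\<in>{0<..}. g (x - s *\<^sub>R v) \<partial>lborel) \<partial>lborel)
    \<le> ennreal (2 * R / norm v) * (\<integral>\<^sup>+y. g y \<partial>lborel)"
proof -
  define c where "c = 2 * R / norm v"
  define F where "F x s = g (x - s *\<^sub>R v) * indicator {0<..} s * indicator \<Omega> x" for x s
  note [measurable] = g \<Omega>(1)
  have [measurable]: "case_prod F \<in> borel_measurable (lborel \<Otimes>\<^sub>M lborel)"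
    unfolding F_def by measurable
  have F_translate: "F (y + s *\<^sub>R v) s \<le> g y * indicator {0<..<c} s" for y s
  proof (cases "g y = 0 \<or> s \<le> 0 \<or> y + s *\<^sub>R v \<notin> \<Omega>")
    case False
    then have "y \<in> \<Omega>" "0 < s" "y + s *\<^sub>R v \<in> \<Omega>"
      using g_zero by auto
    with \<Omega>(2) have "norm y < R" "norm (y + s *\<^sub>R v) < R"
      by auto
    moreover have "s * norm v \<le> norm (y + s *\<^sub>R v) + norm y"
      using norm_triangle_ineq4[of "y + s *\<^sub>R v" y] \<open>0 < s\<close> by simp
    ultimately have "s * norm v < 2 * R"
      by linarith
    with v \<open>0 < s\<close> have "s < c"
      by (simp add: c_def field_simps)
    with \<open>0 < s\<close> \<open>y + s *\<^sub>R v \<in> \<Omega>\<close> show ?thesis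
      by (simp add: F_def)
  qed (auto simp: F_def)
  have "(\<integral>\<^sup>+x\<in>\<Omega>. (\<integral>\<^sup>+s\<in>{0<..}. g (x - s *\<^sub>R v) \<partial>lborel) \<partial>lborel) = (\<integral>\<^sup>+x. (\<integral>\<^sup>+s. F x s \<partial>lborel) \<partial>lborel)"
    by (simp add: F_def nn_integral_multc)
  also have "\<dots> = (\<integral>\<^sup>+s. (\<integral>\<^sup>+x. F x s \<partial>lborel) \<partial>lborel)"
    by (rule lborel_pair.Fubini') simp
  also have "\<dots> = (\<integral>\<^sup>+s. (\<integral>\<^sup>+y. F (y + s *\<^sub>R v) s \<partial>lborel) \<partial>lborel)"
  proof (rule nn_integral_cong)
    fix s :: real
    have "(\<integral>\<^sup>+x. F x s \<partial>lborel) = (\<integral>\<^sup>+x. F x s \<partial>distr lborel borel ((+) (s *\<^sub>R v)))"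
      by (simp add: lborel_distr_plus)
    also have "\<dots> = (\<integral>\<^sup>+y. F (s *\<^sub>R v + y) s \<partial>lborel)"
      by (rule nn_integral_distr) (simp_all add: F_def)
    finally show "(\<integral>\<^sup>+x. F x s \<partial>lborel) = (\<integral>\<^sup>+y. F (y + s *\<^sub>R v) s \<partial>lborel)"
      by (simp add: add.commute)
  qed
  also have "\<dots> \<le> (\<integral>\<^sup>+s. (\<integral>\<^sup>+y. g y * indicator {0<..<c} s \<partial>lborel) \<partial>lborel)"
    by (intro nn_integral_mono F_translate)
  also have "\<dots> = (\<integral>\<^sup>+y. g y \<partial>lborel) * ennreal c"
    by (cases "0 \<le> c") (simp_all add: nn_integral_multc nn_integral_cmult_indicator ennreal_neg)
  finally show ?thesis
    by (simp add: c_def mult.commute)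
qed

context
  fixes \<Omega> :: "(real^'n) set" and f :: "(real^'n) \<times> (real^'n) \<Rightarrow> complex"
  assumes open_\<Omega>: "open \<Omega>" and bounded_\<Omega>: "bounded \<Omega>" and f_borel: "f \<in> borel_measurable borel"
begin

lemma Rres_abs_le_backward_ray:
  "Rres_abs \<Omega> f (x, v)
    \<le> (\<integral>\<^sup>+s\<in>{0<..}. indicator \<Omega> (x - s *\<^sub>R v) * ennreal (norm (f (x - s *\<^sub>R v, v))) \<partial>lborel)"
  unfolding Rres_abs_def prod.case
  by (intro nn_integral_mono) (auto simp: indicator_def mem_of_less_tminus)

lemma nn_integral_weighted_Rres_abs_section_le:
  assumes R: "\<Omega> \<subseteq> ball 0 R"
  shows "(\<integral>\<^sup>+x. indicator \<Omega> x * (ennreal (wt k v) * Rres_abs \<Omega> f (x, v)) \<partial>lborel)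
    \<le> ennreal (2 * R) * (\<integral>\<^sup>+x. indicator \<Omega> x * ennreal (wt (Suc k) v * norm (f (x, v))) \<partial>lborel)"
proof (cases "v = 0")
  case True
  then show ?thesis
    by (simp add: Rres_abs_def)
next
  case False
  define g where "g y = indicator \<Omega> y * ennreal (norm (f (y, v)))" for y
  have [measurable]: "\<Omega> \<in> sets borel"
    using open_\<Omega> by simp
  have [measurable]: "(\<lambda>x. Rres_abs \<Omega> f (x, v)) \<in> borel_measurable borel"
    by (rule measurable_compose[OF _ borel_measurable_Rres_abs[OF open_\<Omega> bounded_\<Omega> f_borel]])
      (intro borel_measurable_continuous_onI continuous_intros)
  have [measurable]: "(\<lambda>y. f (y, v)) \<in> borel_measurable borel"
    by (rule measurable_compose[OF _ f_borel]) (intro borel_measurable_continuous_onI continuous_intros)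
  then have [measurable]: "g \<in> borel_measurable borel"
    unfolding g_def by measurable
  have "(\<integral>\<^sup>+x. indicator \<Omega> x * (ennreal (wt k v) * Rres_abs \<Omega> f (x, v)) \<partial>lborel)
      = ennreal (wt k v) * (\<integral>\<^sup>+x\<in>\<Omega>. Rres_abs \<Omega> f (x, v) \<partial>lborel)"
    by (subst nn_integral_cmult[symmetric]) (simp_all add: ac_simps)
  also have "\<dots> \<le> ennreal (wt k v) * (\<integral>\<^sup>+x\<in>\<Omega>. (\<integral>\<^sup>+s\<in>{0<..}. g (x - s *\<^sub>R v) \<partial>lborel) \<partial>lborel)"
    using Rres_abs_le_backward_ray
    by (intro mult_left_mono nn_integral_mono) (auto simp: g_def indicator_def)
  also have "\<dots> \<le> ennreal (wt k v) * (ennreal (2 * R / norm v) * (\<integral>\<^sup>+y. g y \<partial>lborel))"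
    by (intro mult_left_mono nn_integral_backward_ray_le R False) (auto simp: g_def)
  also have "\<dots> \<le> ennreal (2 * R) * (ennreal (wt (Suc k) v) * (\<integral>\<^sup>+y. g y \<partial>lborel))"
    using ennreal_wt_mult_divide_norm_le[OF False, of k "2 * R"]
    by (simp add: mult.assoc[symmetric] mult_right_mono)
  also have "\<dots> = ennreal (2 * R) * (\<integral>\<^sup>+x. indicator \<Omega> x * ennreal (wt (Suc k) v * norm (f (x, v))) \<partial>lborel)"
    by (subst nn_integral_cmult[symmetric]) (simp_all add: g_def ennreal_wt_mult ac_simps)
  finally show ?thesis .
qed

end

section \<open>Estimates in the weighted spaces\<close>

lemma nn_integral_indicator_Times_section:
  "(\<integral>\<^sup>+x. indicator (A \<times> B) (x, v) * h x \<partial>M) = indicator B v * (\<integral>\<^sup>+x. indicator A x * h x \<partial>M)"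
  by (cases "v \<in> B") (simp_all add: indicator_times)

lemma closed_msupport: "closed (msupport M)"
proof -
  have "open (- msupport M)"
  proof (subst open_subopen, intro ballI)
    fix v assume "v \<in> - msupport M"
    then obtain U where U: "open U" "v \<in> U" "\<not> emeasure M U > 0"
      by (auto simp: msupport_def)
    then have "U \<subseteq> - msupport M"
      by (auto simp: msupport_def)
    with U show "\<exists>T. open T \<and> v \<in> T \<and> T \<subseteq> - msupport M"
      by blast
  qed
  then show ?thesis
    by (simp add: closed_def)
qed

lemma sigma_finite_if_finite_on_compacts:
  fixes M :: "'a::{heine_borel, real_normed_vector} measure"
  assumes "sets M = sets borel" and "\<And>K. compact K \<Longrightarrow> emeasure M K < \<infinity>"
  shows "sigma_finite_measure M"
proof
  have "\<exists>n::nat. x \<in> cball 0 (real n)" for x :: 'a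
    using real_arch_simple[of "norm x"] by auto
  then show "\<exists>A. countable A \<and> A \<subseteq> sets M \<and> \<Union>A = space M \<and> (\<forall>a\<in>A. emeasure M a \<noteq> \<infinity>)"
    using assms(1) assms(2)[OF compact_cball] sets_eq_imp_space_eq[OF assms(1)]
    by (intro exI[of _ "range (\<lambda>n::nat. cball 0 (real n))"]) (auto simp: less_top)
qed

context
  fixes \<Omega> :: "(real^'n) set" and m :: "(real^'n) measure"
  assumes open_\<Omega>: "open \<Omega>" and bounded_\<Omega>: "bounded \<Omega>" and sets_m: "sets m = sets borel"
    and finite_m: "\<And>K. compact K \<Longrightarrow> emeasure m K < \<infinity>"
begin

interpretation pair_sigma_finite lborel m
  by (intro pair_sigma_finite.intro sigma_finite_lborel sigma_finite_if_finite_on_compacts sets_m finite_m)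

lemma sets_lborel_pair_m: "sets (lborel \<Otimes>\<^sub>M m) = sets (borel :: ((real^'n) \<times> (real^'n)) measure)"
proof -
  have "sets (lborel \<Otimes>\<^sub>M m) = sets (borel \<Otimes>\<^sub>M borel :: ((real^'n) \<times> (real^'n)) measure)"
    by (rule sets_pair_measure_cong) (simp_all add: sets_m)
  then show ?thesis
    by (subst (asm) borel_prod) simp
qed

lemma measurable_lborel_pair_m: "measurable (lborel \<Otimes>\<^sub>M m) N = measurable (borel :: ((real^'n) \<times> (real^'n)) measure) N"
  by (intro measurable_cong_sets sets_lborel_pair_m refl)

lemma domain_measurable [measurable]: "\<Omega> \<in> sets borel"
  using open_\<Omega> by simp

lemma msupport_measurable [measurable]: "msupport m \<in> sets m"
  using closed_msupport[of m] by (simp add: sets_m borel_closed)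

lemma borel_measurable_wt_m [measurable]: "wt k \<in> borel_measurable m"
  by (subst measurable_cong_sets[OF sets_m refl]) (rule borel_measurable_wt)

lemma borel_measurable_if_inX: "inX \<Omega> m k f \<Longrightarrow> f \<in> borel_measurable borel"
  by (simp add: inX_def measurable_lborel_pair_m)

lemma nn_integral_weighted_Rres_abs_le:
  assumes f: "f \<in> borel_measurable borel" and R: "\<Omega> \<subseteq> ball 0 R"
  shows "(\<integral>\<^sup>+z. indicator (\<Omega> \<times> msupport m) z * (ennreal (wt k (snd z)) * Rres_abs \<Omega> f z) \<partial>(lborel \<Otimes>\<^sub>M m))
    \<le> ennreal (2 * R) *
      (\<integral>\<^sup>+z. indicator (\<Omega> \<times> msupport m) z * ennreal (wt (Suc k) (snd z) * norm (f z)) \<partial>(lborel \<Otimes>\<^sub>M m))"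
proof -
  have [measurable]: "f \<in> borel_measurable (lborel \<Otimes>\<^sub>M m)"
    "Rres_abs \<Omega> f \<in> borel_measurable (lborel \<Otimes>\<^sub>M m)"
    using f borel_measurable_Rres_abs[OF open_\<Omega> bounded_\<Omega> f] by (simp_all add: measurable_lborel_pair_m)
  have [measurable]: "(\<lambda>z. ennreal (wt j (snd z) * norm (f z))) \<in> borel_measurable (lborel \<Otimes>\<^sub>M m)" for j
    by measurable
  have "(\<integral>\<^sup>+z. indicator (\<Omega> \<times> msupport m) z * (ennreal (wt k (snd z)) * Rres_abs \<Omega> f z) \<partial>(lborel \<Otimes>\<^sub>M m))
      = (\<integral>\<^sup>+v. indicator (msupport m) v *
          (\<integral>\<^sup>+x. indicator \<Omega> x * (ennreal (wt k v) * Rres_abs \<Omega> f (x, v)) \<partial>lborel) \<partial>m)"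
    by (subst nn_integral_snd[symmetric]) (simp_all add: nn_integral_indicator_Times_section)
  also have "\<dots> \<le> (\<integral>\<^sup>+v. indicator (msupport m) v * (ennreal (2 * R) *
          (\<integral>\<^sup>+x. indicator \<Omega> x * ennreal (wt (Suc k) v * norm (f (x, v))) \<partial>lborel)) \<partial>m)"
    by (intro nn_integral_mono mult_left_mono
        nn_integral_weighted_Rres_abs_section_le[OF open_\<Omega> bounded_\<Omega> f R]) simp
  also have "\<dots> = ennreal (2 * R) * (\<integral>\<^sup>+v. indicator (msupport m) v *
          (\<integral>\<^sup>+x. indicator \<Omega> x * ennreal (wt (Suc k) v * norm (f (x, v))) \<partial>lborel) \<partial>m)"
    by (subst nn_integral_cmult[symmetric, where M=m]) (simp_all add: ac_simps)
  also have "\<dots> = ennreal (2 * R) *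
      (\<integral>\<^sup>+z. indicator (\<Omega> \<times> msupport m) z * ennreal (wt (Suc k) (snd z) * norm (f z)) \<partial>(lborel \<Otimes>\<^sub>M m))"
    by (subst nn_integral_snd[symmetric]) (simp_all add: nn_integral_indicator_Times_section)
  finally show ?thesis .
qed

lemma nn_integral_weighted_Rres_abs_finite:
  assumes "inX \<Omega> m (Suc k) f"
  shows "(\<integral>\<^sup>+z. indicator (\<Omega> \<times> msupport m) z * (ennreal (wt k (snd z)) * Rres_abs \<Omega> f z) \<partial>(lborel \<Otimes>\<^sub>M m)) < \<infinity>"
proof -
  obtain R where "\<Omega> \<subseteq> ball 0 R"
    using bounded_subset_ballD[OF bounded_\<Omega>] by blast
  with assms show ?thesis
    by (auto simp: inX_def ennreal_mult_less_top borel_measurable_if_inX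
        intro: le_less_trans[OF nn_integral_weighted_Rres_abs_le])
qed

lemma AE_Rres_abs_finite:
  assumes "inX \<Omega> m (Suc k) f"
  shows "AE z in lborel \<Otimes>\<^sub>M m. z \<in> \<Omega> \<times> msupport m \<longrightarrow> Rres_abs \<Omega> f z < \<infinity>"
proof -
  have [measurable]: "Rres_abs \<Omega> f \<in> borel_measurable (lborel \<Otimes>\<^sub>M m)"
    using borel_measurable_Rres_abs[OF open_\<Omega> bounded_\<Omega> borel_measurable_if_inX[OF assms]]
    by (simp add: measurable_lborel_pair_m)
  have "AE z in lborel \<Otimes>\<^sub>M m.
      indicator (\<Omega> \<times> msupport m) z * (ennreal (wt k (snd z)) * Rres_abs \<Omega> f z) \<noteq> \<infinity>"
    using nn_integral_weighted_Rres_abs_finite[OF assms] by (intro nn_integral_PInf_AE) simp_all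
  then show ?thesis
  proof eventually_elim
    case (elim z)
    have "ennreal (wt k (snd z)) \<noteq> 0"
      using wt_ge_1[of k "snd z"] by simp
    with elim show ?case
      by (auto simp: ennreal_mult_eq_top_iff less_top)
  qed
qed

lemma nn_integral_weighted_enn2real_Rres_abs_finite:
  assumes "inX \<Omega> m (Suc k) f"
  shows "(\<integral>\<^sup>+z. ennreal (indicator (\<Omega> \<times> msupport m) z * wt k (snd z) * enn2real (Rres_abs \<Omega> f z))
    \<partial>(lborel \<Otimes>\<^sub>M m)) < \<infinity>"
proof -
  have "ennreal (indicator (\<Omega> \<times> msupport m) z * wt k (snd z) * enn2real (Rres_abs \<Omega> f z))
      \<le> indicator (\<Omega> \<times> msupport m) z * (ennreal (wt k (snd z)) * Rres_abs \<Omega> f z)" for z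
    by (cases "z \<in> \<Omega> \<times> msupport m")
      (simp_all add: ennreal_wt_mult mult_left_mono ennreal_enn2real_if)
  then show ?thesis
    by (intro le_less_trans[OF nn_integral_mono nn_integral_weighted_Rres_abs_finite[OF assms]])
qed

lemma Rres_inX:
  assumes f: "inX \<Omega> m (Suc k) f" and lam: "0 \<le> Re lam"
  shows "inX \<Omega> m k (Rres \<Omega> lam f)"
  unfolding inX_def
proof
  show "Rres \<Omega> lam f \<in> borel_measurable (lborel \<Otimes>\<^sub>M m)"
    using borel_measurable_Rres[OF open_\<Omega> bounded_\<Omega> borel_measurable_if_inX[OF f]]
    by (simp add: measurable_lborel_pair_m)
  have "(\<integral>\<^sup>+z. indicator (\<Omega> \<times> msupport m) z * ennreal (wt k (snd z) * norm (Rres \<Omega> lam f z)) \<partial>(lborel \<Otimes>\<^sub>M m))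
    \<le> (\<integral>\<^sup>+z. indicator (\<Omega> \<times> msupport m) z * (ennreal (wt k (snd z)) * Rres_abs \<Omega> f z) \<partial>(lborel \<Otimes>\<^sub>M m))"
    by (intro nn_integral_mono mult_left_mono)
      (simp_all add: ennreal_wt_mult mult_left_mono norm_Rres_le_Rres_abs[OF lam])
  then show "(\<integral>\<^sup>+z. indicator (\<Omega> \<times> msupport m) z * ennreal (wt k (snd z) * norm (Rres \<Omega> lam f z)) \<partial>(lborel \<Otimes>\<^sub>M m)) < \<infinity>"
    using nn_integral_weighted_Rres_abs_finite[OF f] by (rule le_less_trans)
qed

lemma Xnorm_Rres_tendsto:
  assumes f: "inX \<Omega> m (Suc k) f"
    and Re_ge: "\<And>n. 0 \<le> Re (lam_seq n)" and lim: "lam_seq \<longlonglongrightarrow> lam"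
  shows "(\<lambda>n. Xnorm \<Omega> m k (\<lambda>z. Rres \<Omega> (lam_seq n) f z - Rres \<Omega> lam f z)) \<longlonglongrightarrow> 0"
proof -
  let ?P = "\<Omega> \<times> msupport m"
  note f_borel = borel_measurable_if_inX[OF f]
  have [measurable]: "Rres \<Omega> \<mu> f \<in> borel_measurable (lborel \<Otimes>\<^sub>M m)"
    "Rres_abs \<Omega> f \<in> borel_measurable (lborel \<Otimes>\<^sub>M m)" for \<mu>
    using borel_measurable_Rres[OF open_\<Omega> bounded_\<Omega> f_borel]
      borel_measurable_Rres_abs[OF open_\<Omega> bounded_\<Omega> f_borel]
    by (simp_all add: measurable_lborel_pair_m)
  have Re_lam: "0 \<le> Re lam"
    using Re_ge by (intro LIMSEQ_le_const[OF tendsto_Re[OF lim]]) auto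
  define u where "u n z = (indicator ?P z * wt k (snd z)) *\<^sub>R (Rres \<Omega> (lam_seq n) f z - Rres \<Omega> lam f z)"
    for n z
  define W where "W z = indicator ?P z * wt k (snd z) * enn2real (Rres_abs \<Omega> f z)" for z
  have "(\<lambda>n. \<integral>\<^sup>+z. norm (0 - u n z) \<partial>(lborel \<Otimes>\<^sub>M m)) \<longlonglongrightarrow> 0"
  proof (rule nn_integral_dominated_convergence_norm[where w="\<lambda>z. 2 * W z"])
    show "u n \<in> borel_measurable (lborel \<Otimes>\<^sub>M m)" for n
      unfolding u_def by measurable
    show "(\<lambda>z. 2 * W z) \<in> borel_measurable (lborel \<Otimes>\<^sub>M m)"
      unfolding W_def by measurable
    show "AE z in lborel \<Otimes>\<^sub>M m. norm (u n z) \<le> 2 * W z" for n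
      using AE_Rres_abs_finite[OF f]
    proof eventually_elim
      case (elim z)
      then show ?case
        using norm_Rres_diff_le[OF Re_ge Re_lam, of \<Omega> f z] wt_ge_1[of k "snd z"]
        by (cases "z \<in> ?P") (simp_all add: u_def W_def)
    qed
    have "(\<integral>\<^sup>+z. 2 * W z \<partial>(lborel \<Otimes>\<^sub>M m)) = 2 * (\<integral>\<^sup>+z. W z \<partial>(lborel \<Otimes>\<^sub>M m))"
      using wt_ge_1[of k] by (subst nn_integral_cmult[symmetric]) (simp_all add: W_def ennreal_mult')
    with nn_integral_weighted_enn2real_Rres_abs_finite[OF f]
    show "(\<integral>\<^sup>+z. 2 * W z \<partial>(lborel \<Otimes>\<^sub>M m)) < \<infinity>"
      by (simp add: W_def ennreal_mult_less_top)
    show "AE z in lborel \<Otimes>\<^sub>M m. (\<lambda>n. u n z) \<longlonglongrightarrow> 0"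
      using AE_Rres_abs_finite[OF f]
    proof eventually_elim
      case (elim z)
      show ?case
      proof (cases "z \<in> ?P")
        case True
        with elim have "(\<lambda>n. Rres \<Omega> (lam_seq n) f z - Rres \<Omega> lam f z) \<longlonglongrightarrow> 0"
          using Rres_tendsto[OF open_\<Omega> bounded_\<Omega> f_borel _ Re_ge lim] by (simp add: LIM_zero)
        then show ?thesis
          unfolding u_def using tendsto_scaleR[OF tendsto_const] by fastforce
      qed (simp add: u_def)
    qed
  qed simp
  moreover have "Xnorm \<Omega> m k (\<lambda>z. Rres \<Omega> (lam_seq n) f z - Rres \<Omega> lam f z)
      = enn2real (\<integral>\<^sup>+z. norm (0 - u n z) \<partial>(lborel \<Otimes>\<^sub>M m))" for n
    unfolding Xnorm_def u_def
    by (intro arg_cong[where f=enn2real] nn_integral_cong)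
      (simp add: norm_mult indicator_def order_trans[OF zero_le_one wt_ge_1])
  ultimately show ?thesis
    using tendsto_enn2real[of _ 0] by simp
qed

end

theorem lemma4p3:
  fixes \<Omega> :: "(real^'n) set" and m :: "(real^'n) measure" and \<eta> :: real
  assumes "CARD('n) \<ge> 2" and "open \<Omega>" and "bounded \<Omega>" and "C1_boundary \<Omega>"
    and "sets m = sets borel"
    and "\<And>K. compact K \<Longrightarrow> emeasure m K < \<infinity>"
    and "emeasure m {0} = 0"
  shows "(\<forall>f. inX \<Omega> m 1 f \<longrightarrow>
            inX \<Omega> m 0 (Rres \<Omega> (\<i> * of_real \<eta>) f) \<and>
            ((\<lambda>\<epsilon>. Xnorm \<Omega> m 0 (\<lambda>z. Rres \<Omega> (of_real \<epsilon> + \<i> * of_real \<eta>) f z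
                                      - Rres \<Omega> (\<i> * of_real \<eta>) f z)) \<longlongrightarrow> 0) (at_right 0))
       \<and> (\<forall>k f. inX \<Omega> m (k + 1) f \<longrightarrow>
            inX \<Omega> m k (Rres \<Omega> (\<i> * of_real \<eta>) f) \<and>
            ((\<lambda>\<epsilon>. Xnorm \<Omega> m k (\<lambda>z. Rres \<Omega> (of_real \<epsilon> + \<i> * of_real \<eta>) f z
                                      - Rres \<Omega> (\<i> * of_real \<eta>) f z)) \<longlongrightarrow> 0) (at_right 0))"
proof -
  note setting = assms(2,3,5,6)
  have "inX \<Omega> m k (Rres \<Omega> (\<i> * of_real \<eta>) f) \<and>
      ((\<lambda>\<epsilon>. Xnorm \<Omega> m k (\<lambda>z. Rres \<Omega> (of_real \<epsilon> + \<i> * of_real \<eta>) f z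
                                - Rres \<Omega> (\<i> * of_real \<eta>) f z)) \<longlongrightarrow> 0) (at_right 0)"
    if f: "inX \<Omega> m (Suc k) f" for k f
  proof
    show "inX \<Omega> m k (Rres \<Omega> (\<i> * of_real \<eta>) f)"
      using Rres_inX[OF setting f, of "\<i> * of_real \<eta>"] by simp
    show "((\<lambda>\<epsilon>. Xnorm \<Omega> m k (\<lambda>z. Rres \<Omega> (of_real \<epsilon> + \<i> * of_real \<eta>) f z
                                - Rres \<Omega> (\<i> * of_real \<eta>) f z)) \<longlongrightarrow> 0) (at_right 0)"
    proof (rule tendsto_at_right_sequentially[OF zero_less_one])
      fix S :: "nat \<Rightarrow> real"
      assume "\<And>n. 0 < S n" and "S \<longlonglongrightarrow> 0"
      then show "(\<lambda>n. Xnorm \<Omega> m k (\<lambda>z. Rres \<Omega> (of_real (S n) + \<i> * of_real \<eta>) f z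
                                - Rres \<Omega> (\<i> * of_real \<eta>) f z)) \<longlonglongrightarrow> 0"
        by (intro Xnorm_Rres_tendsto[OF setting f] tendsto_eq_intros) (auto intro: less_imp_le)
    qed
  qed
  from this[of 0] this show ?thesis
    by simp
qed

end
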